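(* Let $\mathcal{S}\subset\mathbb{R}^n$ be compact convex with $\|x\|\le D$ for all $x\in\mathcal{S}$, and let $f_t(\theta)=\frac12\|\theta-y_t\|^2$ with $y_t\in\mathcal{S}$, $t=1,\dots,T$. Let $\theta_1\in\mathcal{S}$ and define, for $\gamma\in(0,1)$, $$\theta_{t+1}=\frac{\gamma-\gamma^t}{1-\gamma^t}\theta_t+\frac{1-\gamma}{1-\gamma^t}y_t=\theta_t-\frac{1-\gamma}{1-\gamma^t}\nabla f_t(\theta_t).$$ Let $\theta_t^*=\operatorname{argmin}_{\theta\in\mathcal{S}}f_t(\theta)\,(=y_t)$ and $V^*=\sum_{t=2}^T\|\theta_t^*-\theta_{t-1}^*\|$. If $1-\gamma=1/T^\beta$ with $\beta\in(0,1)$, then $$\sum_{t=1}^T\big(f_t(\theta_t)-f_t(\theta_t^* )\big)\le 2DT^\beta\big(\|\theta_1-\theta_1^*\|+V^*\big).$$ *)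

theory Defs
  imports "HOL-Analysis.Analysis"
begin

end

theory Submission
  imports Defs
begin

text \<open>The iterate \<open>\<theta>\<^sub>t\<^sub>+\<^sub>1\<close> is the \<open>\<gamma>\<close>-discounted mean of \<open>y\<^sub>1, \<dots>, y\<^sub>t\<close>, hence a convex
  combination \<open>c\<^sub>t \<theta>\<^sub>t + (1 - c\<^sub>t) y\<^sub>t\<close> with \<open>0 \<le> c\<^sub>t \<le> \<gamma>\<close>; in particular it stays in \<open>S\<close>,
  and the minimiser of \<open>f\<^sub>t\<close> over \<open>S\<close> is \<open>y\<^sub>t\<close> itself. The tracking error
  \<open>e\<^sub>t = \<parallel>\<theta>\<^sub>t - y\<^sub>t\<parallel>\<close> therefore contracts up to the drift: \<open>e\<^sub>t\<^sub>+\<^sub>1 \<le> \<gamma> e\<^sub>t + \<parallel>y\<^sub>t\<^sub>+\<^sub>1 - y\<^sub>t\<parallel>\<close>.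
  Summing gives \<open>(1 - \<gamma>) \<Sum> e\<^sub>t \<le> e\<^sub>1 + V\<^sup>*\<close>, and since \<open>e\<^sub>t \<le> 2D\<close> the regret
  \<open>\<Sum> e\<^sub>t\<^sup>2 / 2\<close> is at most \<open>D \<Sum> e\<^sub>t \<le> D T\<^sup>\<beta> (e\<^sub>1 + V\<^sup>*)\<close>.\<close>

definition discount_weight :: "real \<Rightarrow> nat \<Rightarrow> real" where
  "discount_weight \<gamma> t = (\<gamma> - \<gamma> ^ t) / (1 - \<gamma> ^ t)"

lemma
  assumes "0 < \<gamma>" and "\<gamma> < 1" and "1 \<le> t"
  shows discount_weight_nonneg: "0 \<le> discount_weight \<gamma> t"
    and discount_weight_le: "discount_weight \<gamma> t \<le> \<gamma>"
    and one_minus_discount_weight: "1 - discount_weight \<gamma> t = (1 - \<gamma>) / (1 - \<gamma> ^ t)"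
proof -
  have "\<gamma> ^ t \<le> \<gamma>" using assms power_decreasing[of 1 t \<gamma>] by simp
  moreover have "\<gamma> ^ t < 1" using assms power_strict_decreasing[of 0 t \<gamma>] by simp
  moreover have "\<gamma> - \<gamma> ^ t \<le> \<gamma> * (1 - \<gamma> ^ t)"
    using assms mult_left_le_one_le[of "\<gamma> ^ t" \<gamma>] by (simp add: algebra_simps)
  ultimately show "0 \<le> discount_weight \<gamma> t" "discount_weight \<gamma> t \<le> \<gamma>"
      "1 - discount_weight \<gamma> t = (1 - \<gamma>) / (1 - \<gamma> ^ t)"
    by (simp_all add: discount_weight_def pos_divide_le_eq field_simps)
qed

lemma convex_combination_iterates_in:
  fixes \<theta> y :: "nat \<Rightarrow> 'a::real_vector"
  assumes "convex S" and "\<theta> 1 \<in> S" and "\<forall>t\<in>{1..T}. y t \<in> S"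
    and "\<forall>t. 1 \<le> t \<and> t < T \<longrightarrow> 0 \<le> c t \<and> c t \<le> 1"
    and "\<forall>t. 1 \<le> t \<and> t < T \<longrightarrow> \<theta> (t + 1) = c t *\<^sub>R \<theta> t + (1 - c t) *\<^sub>R y t"
    and "1 \<le> t" and "t \<le> T"
  shows "\<theta> t \<in> S"
  using \<open>1 \<le> t\<close> \<open>t \<le> T\<close>
proof (induction t rule: dec_induct)
  case base
  show ?case using assms(2) .
next
  case (step t)
  then have "\<theta> (t + 1) = c t *\<^sub>R \<theta> t + (1 - c t) *\<^sub>R y t" and "0 \<le> c t" and "c t \<le> 1"
    using assms(4,5) by auto
  with step assms(1,3) show ?case by (simp add: convexD)
qed

lemma tracking_error_step:
  fixes \<theta> y y' :: "'a::real_normed_vector"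
  assumes "0 \<le> c" and "c \<le> \<gamma>"
  shows "norm (c *\<^sub>R \<theta> + (1 - c) *\<^sub>R y - y') \<le> \<gamma> * norm (\<theta> - y) + norm (y' - y)"
proof -
  have "norm (c *\<^sub>R \<theta> + (1 - c) *\<^sub>R y - y') = norm (c *\<^sub>R (\<theta> - y) - (y' - y))"
    by (simp add: algebra_simps)
  also have "\<dots> \<le> norm (c *\<^sub>R (\<theta> - y)) + norm (y' - y)"
    by (rule norm_triangle_ineq4)
  also have "\<dots> \<le> \<gamma> * norm (\<theta> - y) + norm (y' - y)"
    using assms by (simp add: mult_right_mono)
  finally show ?thesis .
qed

lemma contracting_sequence_sum_le:
  fixes a d :: "nat \<Rightarrow> real"
  assumes "0 \<le> \<gamma>" and "\<And>t. 0 \<le> a t"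
    and "\<And>t. 1 \<le> t \<Longrightarrow> t < T \<Longrightarrow> a (t + 1) \<le> \<gamma> * a t + d (t + 1)"
  shows "(1 - \<gamma>) * (\<Sum>t=1..T. a t) \<le> a 1 + (\<Sum>t=2..T. d t)"
proof (cases "T = 0")
  case True
  then show ?thesis using assms(2) by simp
next
  case False
  have partial: "(1 - \<gamma>) * (\<Sum>t=1..m. a t) + \<gamma> * a m \<le> a 1 + (\<Sum>t=2..m. d t)"
    if "1 \<le> m" and "m \<le> T" for m
    using that
  proof (induction m rule: dec_induct)
    case base
    show ?case by (simp add: algebra_simps)
  next
    case (step m)
    then have "a (m + 1) \<le> \<gamma> * a m + d (m + 1)" using assms(3) by simp
    with step show ?case by (simp add: algebra_simps)
  qed
  then have "(1 - \<gamma>) * (\<Sum>t=1..T. a t) + \<gamma> * a T \<le> a 1 + (\<Sum>t=2..T. d t)"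
    using False by simp
  moreover have "0 \<le> \<gamma> * a T" using assms(1,2) by simp
  ultimately show ?thesis by linarith
qed

lemma discounted_average_tracking:
  fixes \<theta> y :: "nat \<Rightarrow> 'a::real_normed_vector"
  assumes "0 < \<gamma>" and "\<gamma> < 1"
    and "\<forall>t. 1 \<le> t \<and> t < T \<longrightarrow>
           \<theta> (t + 1) = discount_weight \<gamma> t *\<^sub>R \<theta> t + (1 - discount_weight \<gamma> t) *\<^sub>R y t"
  shows "(\<Sum>t=1..T. norm (\<theta> t - y t))
           \<le> (norm (\<theta> 1 - y 1) + (\<Sum>t=2..T. norm (y t - y (t - 1)))) / (1 - \<gamma>)"
proof -
  have "(1 - \<gamma>) * (\<Sum>t=1..T. norm (\<theta> t - y t))
      \<le> norm (\<theta> 1 - y 1) + (\<Sum>t=2..T. norm (y t - y (t - 1)))"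
  proof (rule contracting_sequence_sum_le)
    fix t assume "1 \<le> t" and "t < T"
    then show "norm (\<theta> (t + 1) - y (t + 1))
        \<le> \<gamma> * norm (\<theta> t - y t) + norm (y (t + 1) - y (t + 1 - 1))"
      using assms tracking_error_step[OF discount_weight_nonneg discount_weight_le]
      by (simp add: norm_minus_commute)
  qed (use assms(1) in auto)
  then show ?thesis using assms(2) by (simp add: pos_le_divide_eq mult.commute)
qed

lemma half_sq_norm_diff_le:
  fixes x y :: "'a::real_normed_vector"
  assumes "norm x \<le> D" and "norm y \<le> D"
  shows "(1/2) * (norm (x - y))\<^sup>2 \<le> D * norm (x - y)"
proof -
  have "norm (x - y) \<le> 2 * D"
    using norm_triangle_ineq4[of x y] assms by simp
  then have "norm (x - y) * norm (x - y) \<le> 2 * D * norm (x - y)"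
    by (simp add: mult_right_mono)
  then show ?thesis by (simp add: power2_eq_square)
qed

lemma discounted_average_regret_le:
  fixes \<theta> y :: "nat \<Rightarrow> 'a::real_normed_vector"
  assumes "0 < \<gamma>" and "\<gamma> < 1" and "0 \<le> D"
    and "\<forall>t. 1 \<le> t \<and> t < T \<longrightarrow>
           \<theta> (t + 1) = discount_weight \<gamma> t *\<^sub>R \<theta> t + (1 - discount_weight \<gamma> t) *\<^sub>R y t"
    and "\<forall>t\<in>{1..T}. norm (\<theta> t) \<le> D \<and> norm (y t) \<le> D"
  shows "(\<Sum>t=1..T. (1/2) * (norm (\<theta> t - y t))\<^sup>2)
           \<le> D * ((norm (\<theta> 1 - y 1) + (\<Sum>t=2..T. norm (y t - y (t - 1)))) / (1 - \<gamma>))"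
proof -
  have "(\<Sum>t=1..T. (1/2) * (norm (\<theta> t - y t))\<^sup>2) \<le> (\<Sum>t=1..T. D * norm (\<theta> t - y t))"
    using assms(5) by (intro sum_mono half_sq_norm_diff_le) auto
  also have "\<dots> = D * (\<Sum>t=1..T. norm (\<theta> t - y t))" by (simp add: sum_distrib_left)
  also have "\<dots> \<le> D * ((norm (\<theta> 1 - y 1) + (\<Sum>t=2..T. norm (y t - y (t - 1)))) / (1 - \<gamma>))"
    using discounted_average_tracking[OF assms(1,2,4)] assms(3) by (rule mult_left_mono)
  finally show ?thesis .
qed

theorem theorem3p2:
  fixes S :: "(real ^ 'n) set" and D :: real and T :: nat
    and y \<theta> \<theta>star :: "nat \<Rightarrow> real ^ 'n"
    and f :: "nat \<Rightarrow> real ^ 'n \<Rightarrow> real"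
    and \<gamma> \<beta> :: real
  assumes "compact S" and "convex S"
    and "\<forall>x\<in>S. norm x \<le> D"
    and "\<And>t \<theta>'. f t \<theta>' = (1/2) * (norm (\<theta>' - y t))\<^sup>2"
    and "\<forall>t\<in>{1..T}. y t \<in> S"
    and "\<theta> 1 \<in> S"
    and "0 < \<gamma>" and "\<gamma> < 1"
    and "\<forall>t. 1 \<le> t \<and> t < T \<longrightarrow>
           \<theta> (t + 1) = ((\<gamma> - \<gamma> ^ t) / (1 - \<gamma> ^ t)) *\<^sub>R \<theta> t
                        + ((1 - \<gamma>) / (1 - \<gamma> ^ t)) *\<^sub>R y t"
    and "\<forall>t\<in>{1..T}. \<theta>star t \<in> S \<and> (\<forall>\<theta>'\<in>S. f t (\<theta>star t) \<le> f t \<theta>')"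
    and "0 < \<beta>" and "\<beta> < 1"
    and "1 - \<gamma> = 1 / (real T powr \<beta>)"
  shows "(\<Sum>t=1..T. f t (\<theta> t) - f t (\<theta>star t))
         \<le> 2 * D * real T powr \<beta> *
            (norm (\<theta> 1 - \<theta>star 1) + (\<Sum>t=2..T. norm (\<theta>star t - \<theta>star (t - 1))))"
proof -
  define V where "V = (\<Sum>t=2..T. norm (y t - y (t - 1)))"
  have "T \<noteq> 0" \<comment> \<open>for \<open>T = 0\<close> the step-size hypothesis reads \<open>1 - \<gamma> = 1 / 0 = 0\<close>\<close>
    using assms(8,13) by (cases "T = 0") auto
  have "0 \<le> D" using assms(3,6) norm_ge_zero order_trans by blast
  have step: "\<forall>t. 1 \<le> t \<and> t < T \<longrightarrow>
      \<theta> (t + 1) = discount_weight \<gamma> t *\<^sub>R \<theta> t + (1 - discount_weight \<gamma> t) *\<^sub>R y t"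
    using assms(7,8,9) by (simp add: one_minus_discount_weight) (simp add: discount_weight_def)
  have star: "\<theta>star t = y t" if "t \<in> {1..T}" for t
    using assms(10) assms(5) that by (force simp: assms(4))
  have "\<theta> t \<in> S" if "t \<in> {1..T}" for t
    using convex_combination_iterates_in[OF assms(2,6,5) _ step] that assms(7,8)
      discount_weight_nonneg discount_weight_le by force
  then have bounded: "\<forall>t\<in>{1..T}. norm (\<theta> t) \<le> D \<and> norm (y t) \<le> D"
    using assms(3,5) by blast
  have "(\<Sum>t=1..T. f t (\<theta> t) - f t (\<theta>star t)) = (\<Sum>t=1..T. (1/2) * (norm (\<theta> t - y t))\<^sup>2)"
    using star by (simp add: assms(4))
  also have "\<dots> \<le> D * ((norm (\<theta> 1 - y 1) + V) / (1 - \<gamma>))"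
    unfolding V_def using assms(7,8) \<open>0 \<le> D\<close> step bounded by (rule discounted_average_regret_le)
  also have "\<dots> = D * real T powr \<beta> * (norm (\<theta> 1 - y 1) + V)"
    using assms(13) \<open>T \<noteq> 0\<close> by simp
  also have "\<dots> \<le> 2 * D * real T powr \<beta> * (norm (\<theta> 1 - y 1) + V)"
    using \<open>0 \<le> D\<close> by (simp add: V_def sum_nonneg)
  also have "norm (\<theta> 1 - y 1) + V
      = norm (\<theta> 1 - \<theta>star 1) + (\<Sum>t=2..T. norm (\<theta>star t - \<theta>star (t - 1)))"
  proof -
    have "norm (y t - y (t - 1)) = norm (\<theta>star t - \<theta>star (t - 1))" if "t \<in> {2..T}" for t
      using that star[of t] star[of "t - 1"] by force
    then show ?thesis using \<open>T \<noteq> 0\<close> star[of 1] by (simp add: V_def)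
  qed
  finally show ?thesis .
qed

end
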